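(* Fix either an RSK growth diagram or a $d$-RSK growth diagram on a Young diagram $F$, and let $\alpha,\beta$ be partitions assigned to lattice points of the diagram. (i) If $\alpha$ is located weakly below and weakly to the left of $\beta$, then $\alpha\subseteq\beta$. (ii) If $\alpha,\beta$ are at the endpoints of a horizontal edge with $\alpha$ to the left of $\beta$, then $|\beta|-|\alpha|$ equals the sum of the entries in the column of cells below that edge; if they are at the endpoints of a vertical edge with $\alpha$ below $\beta$, then $|\beta|-|\alpha|$ equals the sum of the entries in the row of cells to the left of that edge. (iii) Reflecting all the data of the growth diagram (cells, entries, partitions) across the line $y=x$ gives a growth diagram of the same type (RSK or $d$-RSK) on the reflected Young diagram $F'$.
   Context: Partitions are finite weakly decreasing sequences of positive integers with $\lambda_i=0$ for $i>\ell(\lambda)$, $|\lambda|=\sum\lambda_i$; $d$-partitions have $\ell(\lambda)\le d$; $\alpha\subseteq\beta$ means $\alpha_i\le\beta_i$ for all $i$; $\alpha\prec\beta$ (also $\beta\succ\alpha$) means $\beta_1\ge\alpha_1\ge\beta_2\ge\alpha_2\ge\cdots$. Young diagrams lie in the first quadrant with unit cells at integer lattice points, left-justified, rows stacked upward from the $x$-axis; lattice points are cell corners, edges are cell sides; a filling assigns nonnegative integers to cells. A growth diagram on $F$ is a filling plus a partition at each lattice point, with $\emptyset$ at all lattice points on the coordinate axes, such that each cell satisfies a local rule. For a cell with entry $m$ and bottom-left, top-left, bottom-right, top-right corners $\kappa,\mu,\nu,\rho$: RSK local rule: $\mu\succ\kappa\prec\nu$, $\mu\prec\rho\succ\nu$,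 $\rho_1=m+\max(\mu_1,\nu_1)$, and $\rho_i+\kappa_{i-1}=\min(\mu_{i-1},\nu_{i-1})+\max(\mu_i,\nu_i)$ for all $i\ge2$. $d$-RSK local rule: all four are $d$-partitions, $\mu\succ\kappa\prec\nu$, $\mu\prec\rho\succ\nu$, $m=0$ or $\kappa_d=0$, $\rho_1+\kappa_d=m+\min(\mu_d,\nu_d)+\max(\mu_1,\nu_1)$, and $\rho_i+\kappa_{i-1}=\min(\mu_{i-1},\nu_{i-1})+\max(\mu_i,\nu_i)$ for $2\le i\le d$. An RSK (resp. $d$-RSK) growth diagram is one in which every cell satisfies the RSK (resp. $d$-RSK) local rule. *)

theory Defs
  imports Main
begin

text \<open>A partition is represented as a function la :: nat => nat, where la i is the
i-th part for i >= 1 (parts indexed from 1 as in the paper); the unused index 0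
is normalised to 0. Parts are weakly decreasing and only finitely many are nonzero.\<close>

type_synonym partition = "nat \<Rightarrow> nat"

definition is_partition :: "partition \<Rightarrow> bool" where
  "is_partition la \<longleftrightarrow> la 0 = 0 \<and> (\<forall>i\<ge>1. la (Suc i) \<le> la i) \<and> finite {i. la i \<noteq> 0}"

definition empty_partition :: partition where
  "empty_partition = (\<lambda>_. 0)"

definition is_dpartition :: "nat \<Rightarrow> partition \<Rightarrow> bool" where
  "is_dpartition d la \<longleftrightarrow> is_partition la \<and> (\<forall>i>d. la i = 0)"

definition psize :: "partition \<Rightarrow> nat" where
  "psize la = (\<Sum>i\<in>{i. la i \<noteq> 0}. la i)"

definition psubseteq :: "partition \<Rightarrow> partition \<Rightarrow> bool" where
  "psubseteq a b \<longleftrightarrow> (\<forall>i. a i \<le> b i)"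

definition interlace :: "partition \<Rightarrow> partition \<Rightarrow> bool" where
  "interlace a b \<longleftrightarrow> (\<forall>i\<ge>1. a i \<le> b i \<and> b (Suc i) \<le> a i)"

text \<open>Cells are identified with their bottom-left lattice point (x,y) in nat x nat.
A Young diagram (French convention, first quadrant) is a finite down-closed set of cells.\<close>

definition young_diagram :: "(nat \<times> nat) set \<Rightarrow> bool" where
  "young_diagram F \<longleftrightarrow> finite F \<and>
     (\<forall>x y x' y'. (x, y) \<in> F \<and> x' \<le> x \<and> y' \<le> y \<longrightarrow> (x', y') \<in> F)"

definition lattice_points :: "(nat \<times> nat) set \<Rightarrow> (nat \<times> nat) set" where
  "lattice_points F = {(x, y). \<exists>(a, b)\<in>F. x \<in> {a, Suc a} \<and> y \<in> {b, Suc b}}"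

text \<open>Horizontal edges ((x,y),(x+1,y)) and vertical edges ((x,y),(x,y+1)) of F:
  sides of cells of F, given by their left / lower endpoint.\<close>
definition horiz_edge :: "(nat \<times> nat) set \<Rightarrow> nat \<Rightarrow> nat \<Rightarrow> bool" where
  "horiz_edge F x y \<longleftrightarrow> (x, y) \<in> F \<or> (y > 0 \<and> (x, y - 1) \<in> F)"

definition vert_edge :: "(nat \<times> nat) set \<Rightarrow> nat \<Rightarrow> nat \<Rightarrow> bool" where
  "vert_edge F x y \<longleftrightarrow> (x, y) \<in> F \<or> (x > 0 \<and> (x - 1, y) \<in> F)"

text \<open>Arguments: entry m, then corners kappa (bottom-left), mu (top-left),
  nu (bottom-right), rho (top-right).\<close>

definition rsk_local :: "nat \<Rightarrow> partition \<Rightarrow> partition \<Rightarrow> partition \<Rightarrow> partition \<Rightarrow> bool" where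
  "rsk_local m ka mu nu rho \<longleftrightarrow>
     interlace ka mu \<and> interlace ka nu \<and> interlace mu rho \<and> interlace nu rho \<and>
     rho 1 = m + max (mu 1) (nu 1) \<and>
     (\<forall>i\<ge>2. rho i + ka (i - 1) = min (mu (i - 1)) (nu (i - 1)) + max (mu i) (nu i))"

definition drsk_local :: "nat \<Rightarrow> nat \<Rightarrow> partition \<Rightarrow> partition \<Rightarrow> partition \<Rightarrow> partition \<Rightarrow> bool" where
  "drsk_local d m ka mu nu rho \<longleftrightarrow>
     is_dpartition d ka \<and> is_dpartition d mu \<and> is_dpartition d nu \<and> is_dpartition d rho \<and>
     interlace ka mu \<and> interlace ka nu \<and> interlace mu rho \<and> interlace nu rho \<and>
     (m = 0 \<or> ka d = 0) \<and>
     rho 1 + ka d = m + min (mu d) (nu d) + max (mu 1) (nu 1) \<and>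
     (\<forall>i. 2 \<le> i \<and> i \<le> d \<longrightarrow>
        rho i + ka (i - 1) = min (mu (i - 1)) (nu (i - 1)) + max (mu i) (nu i))"

datatype growth_type = RSK | dRSK nat

definition local_rule :: "growth_type \<Rightarrow> nat \<Rightarrow> partition \<Rightarrow> partition \<Rightarrow> partition \<Rightarrow> partition \<Rightarrow> bool" where
  "local_rule T m ka mu nu rho = (case T of RSK \<Rightarrow> rsk_local m ka mu nu rho
                                      | dRSK d \<Rightarrow> drsk_local d m ka mu nu rho)"

definition growth_diagram ::
  "growth_type \<Rightarrow> (nat \<times> nat) set \<Rightarrow> (nat \<times> nat \<Rightarrow> nat) \<Rightarrow> (nat \<times> nat \<Rightarrow> partition) \<Rightarrow> bool" where
  "growth_diagram T F f P \<longleftrightarrow> young_diagram F \<and>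
     (\<forall>p\<in>lattice_points F. is_partition (P p)) \<and>
     (\<forall>(x, y)\<in>lattice_points F. x = 0 \<or> y = 0 \<longrightarrow> P (x, y) = empty_partition) \<and>
     (\<forall>(x, y)\<in>F. local_rule T (f (x, y)) (P (x, y)) (P (x, Suc y)) (P (Suc x, y)) (P (Suc x, Suc y)))"

end

theory Submission
  imports Defs
begin

text \<open>Summing the local rule over all indices i, the terms min + max of the middle corners
add up to |\<mu>| + |\<nu>|, so every cell satisfies |\<rho>| + |\<kappa>| = m + |\<mu>| + |\<nu>|; induction up a
column then gives the edge formula (ii). Interlacing partitions are nested, so partitions grow
weakly along every column and row, which gives (i). Both local rules are symmetric in \<mu> and
\<nu>, so the transposed data is again a growth diagram (iii); transposition also turns the row
statements into the column statements.\<close>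

lemma is_partition_eventually_zero:
  assumes "is_partition la"
  obtains N where "\<And>i. N < i \<Longrightarrow> la i = 0"
proof -
  have "finite {i. la i \<noteq> 0}" using assms unfolding is_partition_def by simp
  then obtain N where "\<forall>i\<in>{i. la i \<noteq> 0}. i \<le> N" using finite_nat_set_iff_bounded_le by blast
  then show thesis using that by (metis (mono_tags) leD mem_Collect_eq)
qed

lemma psize_eq_sum_atLeastAtMost:
  assumes "is_partition la" and "\<And>i. N < i \<Longrightarrow> la i = 0"
  shows "psize la = (\<Sum>i=1..N. la i)"
  unfolding psize_def
proof (rule sum.mono_neutral_left)
  have "la 0 = 0" using assms(1) unfolding is_partition_def by simp
  then show "{i. la i \<noteq> 0} \<subseteq> {1..N}" using assms(2)
    by (metis (mono_tags) atLeastAtMost_iff leI less_one mem_Collect_eq subsetI)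
qed auto

lemma psize_eq_sum_dpartition: "is_dpartition d la \<Longrightarrow> psize la = (\<Sum>i=1..d. la i)"
  unfolding is_dpartition_def by (metis psize_eq_sum_atLeastAtMost)

lemma psubseteq_refl: "psubseteq la la"
  unfolding psubseteq_def by simp

lemma psubseteq_trans: "psubseteq la mu \<Longrightarrow> psubseteq mu nu \<Longrightarrow> psubseteq la nu"
  unfolding psubseteq_def using order_trans by blast

lemma interlace_imp_psubseteq:
  assumes "interlace la mu" and "is_partition la" and "is_partition mu"
  shows "psubseteq la mu"
  using assms unfolding interlace_def is_partition_def psubseteq_def
  by (metis less_one not_le order_refl)

text \<open>The d-RSK rule closes the chain of equations cyclically through rho 1 + ka d; the RSK rule
is the case of an n beyond the lengths of all four partitions, where the wrap-around terms vanish.\<close>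

lemma cyclic_local_equations_sum:
  fixes ka mu nu rho :: partition
  assumes wrap: "rho 1 + ka n = m + min (mu n) (nu n) + max (mu 1) (nu 1)"
    and inner: "\<And>i. 2 \<le> i \<Longrightarrow> i \<le> n \<Longrightarrow>
      rho i + ka (i - 1) = min (mu (i - 1)) (nu (i - 1)) + max (mu i) (nu i)"
    and "1 \<le> n"
  shows "(\<Sum>i=1..n. rho i) + (\<Sum>i=1..n. ka i) = m + (\<Sum>i=1..n. mu i) + (\<Sum>i=1..n. nu i)"
proof -
  have partial: "(\<Sum>i=1..k. rho i) + (\<Sum>i=1..<k. ka i) + ka n =
      m + min (mu n) (nu n) + (\<Sum>i=1..<k. min (mu i) (nu i)) + (\<Sum>i=1..k. max (mu i) (nu i))"
    if "1 \<le> k" "k \<le> n" for k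
    using that
  proof (induction k rule: dec_induct)
    case base
    then show ?case using wrap by simp
  next
    case (step k)
    then show ?case using inner[of "Suc k"] by (simp add: sum.cl_ivl_Suc)
  qed
  obtain n' where n: "n = Suc n'" using \<open>1 \<le> n\<close> by (cases n) auto
  have "(\<Sum>i=1..n. min (mu i) (nu i)) + (\<Sum>i=1..n. max (mu i) (nu i)) =
      (\<Sum>i=1..n. mu i) + (\<Sum>i=1..n. nu i)"
    unfolding sum.distrib[symmetric] by (rule sum.cong) auto
  with partial[OF \<open>1 \<le> n\<close> order_refl] show ?thesis
    by (simp add: n sum.cl_ivl_Suc atLeastLessThanSuc_atLeastAtMost)
qed

lemma rsk_local_psize:
  assumes rule: "rsk_local m ka mu nu rho"
    and "is_partition ka" "is_partition mu" "is_partition nu" "is_partition rho"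
  shows "psize rho + psize ka = m + psize mu + psize nu"
proof -
  obtain N1 where N1: "\<And>i. N1 < i \<Longrightarrow> ka i = 0"
    using is_partition_eventually_zero[OF assms(2)] by blast
  obtain N2 where N2: "\<And>i. N2 < i \<Longrightarrow> mu i = 0"
    using is_partition_eventually_zero[OF assms(3)] by blast
  obtain N3 where N3: "\<And>i. N3 < i \<Longrightarrow> nu i = 0"
    using is_partition_eventually_zero[OF assms(4)] by blast
  obtain N4 where N4: "\<And>i. N4 < i \<Longrightarrow> rho i = 0"
    using is_partition_eventually_zero[OF assms(5)] by blast
  define N where "N = Suc (N1 + N2 + N3 + N4)"
  have sizes: "psize ka = (\<Sum>i=1..N. ka i)" "psize mu = (\<Sum>i=1..N. mu i)"
      "psize nu = (\<Sum>i=1..N. nu i)" "psize rho = (\<Sum>i=1..N. rho i)"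
    by (intro psize_eq_sum_atLeastAtMost assms(2-5); simp add: N_def N1 N2 N3 N4)+
  have "rho 1 + ka N = m + min (mu N) (nu N) + max (mu 1) (nu 1)"
    using rule by (simp add: rsk_local_def N_def N1 N2 N3)
  moreover have "rho i + ka (i - 1) = min (mu (i - 1)) (nu (i - 1)) + max (mu i) (nu i)"
    if "2 \<le> i" for i
    using rule that unfolding rsk_local_def by blast
  ultimately show ?thesis
    using cyclic_local_equations_sum[of rho ka N m mu nu] by (simp add: sizes N_def)
qed

lemma drsk_local_psize:
  assumes rule: "drsk_local d m ka mu nu rho"
  shows "psize rho + psize ka = m + psize mu + psize nu"
proof -
  have parts: "is_dpartition d ka" "is_dpartition d mu" "is_dpartition d nu" "is_dpartition d rho"
    using rule unfolding drsk_local_def by auto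
  note sizes = parts[THEN psize_eq_sum_dpartition]
  show ?thesis
  proof (cases "d = 0")
    case True
    then have "rho 1 = 0" "mu 1 = 0" "nu 1 = 0" "ka 0 = 0" "mu 0 = 0" "nu 0 = 0"
      using parts unfolding is_dpartition_def is_partition_def by auto
    then have "m = 0" using rule True by (simp add: drsk_local_def)
    with True show ?thesis by (simp add: sizes)
  next
    case False
    then show ?thesis using rule cyclic_local_equations_sum[of rho ka d m mu nu]
      by (simp add: sizes drsk_local_def)
  qed
qed

lemma local_rule_psize:
  assumes "local_rule T m ka mu nu rho"
    and "is_partition ka" "is_partition mu" "is_partition nu" "is_partition rho"
  shows "psize rho + psize ka = m + psize mu + psize nu"
  using assms rsk_local_psize drsk_local_psize
  by (cases T) (simp_all add: local_rule_def)

lemma local_rule_interlace: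
  assumes "local_rule T m ka mu nu rho"
  shows "interlace ka mu" "interlace ka nu" "interlace mu rho" "interlace nu rho"
  using assms unfolding local_rule_def rsk_local_def drsk_local_def
  by (auto split: growth_type.splits)

lemma local_rule_commute: "local_rule T m ka mu nu rho = local_rule T m ka nu mu rho"
  unfolding local_rule_def rsk_local_def drsk_local_def
  by (auto split: growth_type.splits simp: min.commute max.commute)

lemma lattice_points_iff:
  "(x, y) \<in> lattice_points F \<longleftrightarrow>
    (\<exists>a b. (a, b) \<in> F \<and> (x = a \<or> x = Suc a) \<and> (y = b \<or> y = Suc b))"
  unfolding lattice_points_def by auto

lemma cell_corners_in_lattice_points:
  assumes "(x, y) \<in> F"
  shows "(x, y) \<in> lattice_points F" "(Suc x, y) \<in> lattice_points F"
    "(x, Suc y) \<in> lattice_points F" "(Suc x, Suc y) \<in> lattice_points F"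
  using assms lattice_points_iff by blast+

lemma lattice_points_down_closed:
  assumes "young_diagram F" "(x, y) \<in> lattice_points F" "x' \<le> x" "y' \<le> y"
  shows "(x', y') \<in> lattice_points F"
proof -
  obtain a b where ab: "(a, b) \<in> F" "x = a \<or> x = Suc a" "y = b \<or> y = Suc b"
    using assms(2) lattice_points_iff by blast
  have "(min x' a, min y' b) \<in> F"
    using assms(1) ab(1) unfolding young_diagram_def by (meson min.cobounded2)
  moreover have "x' = min x' a \<or> x' = Suc (min x' a)" "y' = min y' b \<or> y' = Suc (min y' b)"
    using ab assms(3,4) by auto
  ultimately show ?thesis using lattice_points_iff by blast
qed

lemma mem_transpose_iff: "(x, y) \<in> (\<lambda>(x, y). (y, x)) ` F \<longleftrightarrow> (y, x) \<in> F"
  by force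

lemma lattice_points_transpose_iff:
  "(x, y) \<in> lattice_points ((\<lambda>(x, y). (y, x)) ` F) \<longleftrightarrow> (y, x) \<in> lattice_points F"
  unfolding lattice_points_iff mem_transpose_iff by blast

lemma young_diagram_transpose: "young_diagram F \<Longrightarrow> young_diagram ((\<lambda>(x, y). (y, x)) ` F)"
  unfolding young_diagram_def by (auto simp: mem_transpose_iff)

lemma horiz_edge_transpose_iff: "horiz_edge ((\<lambda>(x, y). (y, x)) ` F) y x \<longleftrightarrow> vert_edge F x y"
  unfolding horiz_edge_def vert_edge_def mem_transpose_iff ..

context
  fixes T F f P
  assumes growth: "growth_diagram T F f P"
begin

lemma growth_diagram_young: "young_diagram F"
  using growth unfolding growth_diagram_def by blast

lemma growth_diagram_is_partition: "p \<in> lattice_points F \<Longrightarrow> is_partition (P p)"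
  using growth unfolding growth_diagram_def by blast

lemma growth_diagram_axis:
  "(x, y) \<in> lattice_points F \<Longrightarrow> x = 0 \<or> y = 0 \<Longrightarrow> P (x, y) = empty_partition"
  using growth unfolding growth_diagram_def by blast

lemma growth_diagram_local_rule:
  "(x, y) \<in> F \<Longrightarrow> local_rule T (f (x, y)) (P (x, y)) (P (x, Suc y)) (P (Suc x, y)) (P (Suc x, Suc y))"
  using growth unfolding growth_diagram_def by blast

lemma growth_diagram_transpose:
  "growth_diagram T ((\<lambda>(x, y). (y, x)) ` F) (\<lambda>(x, y). f (y, x)) (\<lambda>(x, y). P (y, x))"
  using growth young_diagram_transpose[OF growth_diagram_young]
  unfolding growth_diagram_def
  by (auto simp: mem_transpose_iff lattice_points_transpose_iff local_rule_commute)

lemma growth_diagram_psubseteq_Suc_y: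
  assumes "(x, Suc y) \<in> lattice_points F"
  shows "psubseteq (P (x, y)) (P (x, Suc y))"
proof (cases x)
  case 0
  moreover have "(x, y) \<in> lattice_points F"
    using lattice_points_down_closed[OF growth_diagram_young assms] by simp
  ultimately show ?thesis
    using assms growth_diagram_axis by (simp add: psubseteq_def)
next
  case (Suc a)
  have cell: "(a, y) \<in> F"
    using assms growth_diagram_young unfolding lattice_points_iff young_diagram_def Suc
    by (metis Suc_le_mono le_SucI le_refl)
  have "interlace (P (Suc a, y)) (P (Suc a, Suc y))"
    using growth_diagram_local_rule[OF cell] by (rule local_rule_interlace(4))
  then show ?thesis
    using interlace_imp_psubseteq growth_diagram_is_partition cell_corners_in_lattice_points[OF cell]
    by (simp add: Suc)
qed

lemma growth_diagram_psubseteq_column: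
  "(x, y + k) \<in> lattice_points F \<Longrightarrow> psubseteq (P (x, y)) (P (x, y + k))"
proof (induction k)
  case 0
  then show ?case by (simp add: psubseteq_refl)
next
  case (Suc k)
  then have top: "(x, Suc (y + k)) \<in> lattice_points F" by simp
  then have "(x, y + k) \<in> lattice_points F"
    using lattice_points_down_closed[OF growth_diagram_young top, of x "y + k"] by simp
  then have "psubseteq (P (x, y)) (P (x, y + k))" by (rule Suc.IH)
  moreover have "psubseteq (P (x, y + k)) (P (x, Suc (y + k)))"
    using top by (rule growth_diagram_psubseteq_Suc_y)
  ultimately have "psubseteq (P (x, y)) (P (x, Suc (y + k)))" by (rule psubseteq_trans)
  then show ?case by simp
qed

lemma growth_diagram_psize_horiz_edge:
  "horiz_edge F x y \<Longrightarrow> psize (P (Suc x, y)) = psize (P (x, y)) + (\<Sum>y'<y. f (x, y'))"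
proof (induction y)
  case 0
  then have "(x, 0) \<in> F" unfolding horiz_edge_def by simp
  then show ?case
    using growth_diagram_axis cell_corners_in_lattice_points by simp
next
  case (Suc y)
  then have cell: "(x, y) \<in> F"
    using growth_diagram_young unfolding horiz_edge_def young_diagram_def
    by (metis diff_Suc_1 le_refl lessI less_imp_le_nat)
  then have "horiz_edge F x y" unfolding horiz_edge_def by simp
  moreover have "psize (P (Suc x, Suc y)) + psize (P (x, y)) =
      f (x, y) + psize (P (x, Suc y)) + psize (P (Suc x, y))"
    using local_rule_psize[OF growth_diagram_local_rule[OF cell]]
      growth_diagram_is_partition cell_corners_in_lattice_points[OF cell] by blast
  ultimately show ?case using Suc.IH by simp
qed

end

lemma growth_diagram_psubseteq_row:
  assumes "growth_diagram T F f P" "(x + k, y) \<in> lattice_points F"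
  shows "psubseteq (P (x, y)) (P (x + k, y))"
  using growth_diagram_psubseteq_column[OF growth_diagram_transpose[OF assms(1)], of y x k] assms(2)
  by (simp add: lattice_points_transpose_iff)

lemma growth_diagram_psubseteq:
  assumes growth: "growth_diagram T F f P"
    and "(c, e) \<in> lattice_points F" "a \<le> c" "b \<le> e"
  shows "psubseteq (P (a, b)) (P (c, e))"
proof -
  obtain k l where c: "c = a + k" and e: "e = b + l"
    using assms(3,4) le_Suc_ex by blast
  have "(a, e) \<in> lattice_points F"
    using lattice_points_down_closed[OF growth_diagram_young[OF growth] assms(2)] assms(3) by simp
  then have "psubseteq (P (a, b)) (P (a, e))"
    using growth_diagram_psubseteq_column[OF growth, of a b l] e by simp
  moreover have "psubseteq (P (a, e)) (P (c, e))"
    using growth_diagram_psubseteq_row[OF growth, of a k e] assms(2) c by simp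
  ultimately show ?thesis by (rule psubseteq_trans)
qed

lemma growth_diagram_psize_vert_edge:
  assumes "growth_diagram T F f P" "vert_edge F x y"
  shows "psize (P (x, Suc y)) = psize (P (x, y)) + (\<Sum>x'<x. f (x', y))"
  using growth_diagram_psize_horiz_edge[OF growth_diagram_transpose[OF assms(1)], of y x] assms(2)
  by (simp add: horiz_edge_transpose_iff)

theorem proposition3p1:
  fixes T :: growth_type
    and F :: "(nat \<times> nat) set"
    and f :: "nat \<times> nat \<Rightarrow> nat"
    and P :: "nat \<times> nat \<Rightarrow> partition"
  assumes "growth_diagram T F f P"
  shows
    "(\<forall>a b c e. (a, b) \<in> lattice_points F \<and> (c, e) \<in> lattice_points F \<and> a \<le> c \<and> b \<le> e
        \<longrightarrow> psubseteq (P (a, b)) (P (c, e)))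
   \<and> (\<forall>x y. horiz_edge F x y \<longrightarrow>
        int (psize (P (Suc x, y))) - int (psize (P (x, y))) = int (\<Sum>y'<y. f (x, y')))
   \<and> (\<forall>x y. vert_edge F x y \<longrightarrow>
        int (psize (P (x, Suc y))) - int (psize (P (x, y))) = int (\<Sum>x'<x. f (x', y)))
   \<and> growth_diagram T ((\<lambda>(x, y). (y, x)) ` F) (\<lambda>(x, y). f (y, x)) (\<lambda>(x, y). P (y, x))"
proof (intro conjI allI impI)
  fix a b c e
  assume "(a, b) \<in> lattice_points F \<and> (c, e) \<in> lattice_points F \<and> a \<le> c \<and> b \<le> e"
  then show "psubseteq (P (a, b)) (P (c, e))"
    using growth_diagram_psubseteq[OF assms] by blast
next
  fix x y
  assume "horiz_edge F x y"
  then show "int (psize (P (Suc x, y))) - int (psize (P (x, y))) = int (\<Sum>y'<y. f (x, y'))"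
    using growth_diagram_psize_horiz_edge[OF assms] by simp
next
  fix x y
  assume "vert_edge F x y"
  then show "int (psize (P (x, Suc y))) - int (psize (P (x, y))) = int (\<Sum>x'<x. f (x', y))"
    using growth_diagram_psize_vert_edge[OF assms] by simp
next
  show "growth_diagram T ((\<lambda>(x, y). (y, x)) ` F) (\<lambda>(x, y). f (y, x)) (\<lambda>(x, y). P (y, x))"
    using growth_diagram_transpose[OF assms] .
qed

end
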